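(* Let $S$ be an inductive $E$-demigroup with associated function $\cdot:S\times E\to E$, and let $P=C^d_E(S)$. Then $P$ becomes a left restriction semigroup under $$(e,s)(f,t)=\big(e\wedge(s\cdot f),\,(e\wedge(s\cdot f))st\big),\qquad D((e,s))=(e,e),$$ for all $(e,s),(f,t)\in P$ (this is the induced left restriction semigroup of the inductive constellation $P$), and in it $(e,s)\le(f,t)$ in the natural order if and only if $e\le_r f$ and $s=et$.
   Context: For a semigroup $S$, $E(S)$ is its set of idempotents; for $e,f\in E(S)$, $e\le_r f$ iff $e=ef$. $E\subseteq E(S)$ is right pre-reduced if $e=ef$ and $f=fe$ imply $e=f$ for $e,f\in E$. A demigroup is a semigroup $S$ with unary $d$ such that $d(x)\in E(S)$, $d(x)x=x$, $d(xy)=d(xd(y))$ for all $x,y$. For $E\subseteq E(S)$, $S$ is an $E$-demigroup if $d(s)\in E$ for all $s$ and $ed(e)=e$ for all $e\in E$. It is inductive if $E$ is right pre-reduced, $(E,\le_r)$ is a meet-semilattice with meet $\wedge$, and there is a function $\cdot:S\times E\to E$ with (I1) for all $t\in S$, $e\in E$, $s\in S$: ($ste=st$ and $sd(t)=s$) iff $s(t\cdot e)=s$; (I2) for $s\in S$, $e,f\in E$: $se=sf=s$ implies $s(e\wedge f)=s$. $C^d_E(S)=\{(e,s)\in E\times S\mid es=s,\ d(e)=d(s)\}$; as a constellation its partial product is $(e,s)\circ(f,t)=(e,st)$, defined exactly when $sf=s$, and $D((e,s))=(e,e)$. A left restriction semigroup is a semigroup with unary operation $D$ satisfying $D(x)x=x$,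 $D(x)D(y)=D(y)D(x)$, $D(D(x)y)=D(x)D(y)$ and $xD(y)=D(xy)x$; its natural order is $s\le t$ iff $s=D(s)t$. *)

theory Defs
  imports Main
begin

text \<open>Semigroups are modelled by the type class semigroup_mult; S is the whole type.\<close>

definition idempotents :: "'a::semigroup_mult set" where
  "idempotents = {e. e * e = e}"

definition le_r :: "'a::semigroup_mult \<Rightarrow> 'a \<Rightarrow> bool" where
  "le_r e f \<longleftrightarrow> e = e * f"

definition right_pre_reduced :: "'a::semigroup_mult set \<Rightarrow> bool" where
  "right_pre_reduced E \<longleftrightarrow> E \<subseteq> idempotents \<and>
     (\<forall>e\<in>E. \<forall>f\<in>E. e = e * f \<and> f = f * e \<longrightarrow> e = f)"

definition demigroup :: "('a::semigroup_mult \<Rightarrow> 'a) \<Rightarrow> bool" where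
  "demigroup d \<longleftrightarrow> (\<forall>x. d x \<in> idempotents \<and> d x * x = x) \<and>
     (\<forall>x y. d (x * y) = d (x * d y))"

definition E_demigroup :: "('a::semigroup_mult \<Rightarrow> 'a) \<Rightarrow> 'a set \<Rightarrow> bool" where
  "E_demigroup d E \<longleftrightarrow> demigroup d \<and> E \<subseteq> idempotents \<and>
     (\<forall>s. d s \<in> E) \<and> (\<forall>e\<in>E. e * d e = e)"

definition is_meet_semilattice :: "'a::semigroup_mult set \<Rightarrow> ('a \<Rightarrow> 'a \<Rightarrow> 'a) \<Rightarrow> bool" where
  "is_meet_semilattice E meet \<longleftrightarrow>
     (\<forall>e\<in>E. \<forall>f\<in>E. meet e f \<in> E \<and> le_r (meet e f) e \<and> le_r (meet e f) f \<and>
        (\<forall>g\<in>E. le_r g e \<and> le_r g f \<longrightarrow> le_r g (meet e f)))"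

definition inductive_E_demigroup ::
  "('a::semigroup_mult \<Rightarrow> 'a) \<Rightarrow> 'a set \<Rightarrow> ('a \<Rightarrow> 'a \<Rightarrow> 'a) \<Rightarrow> ('a \<Rightarrow> 'a \<Rightarrow> 'a) \<Rightarrow> bool" where
  "inductive_E_demigroup d E meet dot \<longleftrightarrow>
     E_demigroup d E \<and> right_pre_reduced E \<and> is_meet_semilattice E meet \<and>
     (\<forall>s e. e \<in> E \<longrightarrow> dot s e \<in> E) \<and>
     (\<forall>t e s. e \<in> E \<longrightarrow> ((s * t * e = s * t \<and> s * d t = s) \<longleftrightarrow> s * dot t e = s)) \<and>
     (\<forall>s e f. e \<in> E \<longrightarrow> f \<in> E \<longrightarrow> s * e = s \<longrightarrow> s * f = s \<longrightarrow> s * meet e f = s)"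

definition CdE :: "('a::semigroup_mult \<Rightarrow> 'a) \<Rightarrow> 'a set \<Rightarrow> ('a \<times> 'a) set" where
  "CdE d E = {(e, s). e \<in> E \<and> e * s = s \<and> d e = d s}"

definition P_mult :: "('a::semigroup_mult \<Rightarrow> 'a \<Rightarrow> 'a) \<Rightarrow> ('a \<Rightarrow> 'a \<Rightarrow> 'a) \<Rightarrow>
    'a \<times> 'a \<Rightarrow> 'a \<times> 'a \<Rightarrow> 'a \<times> 'a" where
  "P_mult meet dot x y = (case x of (e, s) \<Rightarrow> case y of (f, t) \<Rightarrow>
      (meet e (dot s f), meet e (dot s f) * s * t))"

definition P_D :: "'a \<times> 'a \<Rightarrow> 'a \<times> 'a" where
  "P_D x = (fst x, fst x)"

definition left_restriction_semigroup ::
  "'b set \<Rightarrow> ('b \<Rightarrow> 'b \<Rightarrow> 'b) \<Rightarrow> ('b \<Rightarrow> 'b) \<Rightarrow> bool" where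
  "left_restriction_semigroup A mul D \<longleftrightarrow>
     (\<forall>x\<in>A. \<forall>y\<in>A. mul x y \<in> A) \<and> (\<forall>x\<in>A. D x \<in> A) \<and>
     (\<forall>x\<in>A. \<forall>y\<in>A. \<forall>z\<in>A. mul (mul x y) z = mul x (mul y z)) \<and>
     (\<forall>x\<in>A. mul (D x) x = x) \<and>
     (\<forall>x\<in>A. \<forall>y\<in>A. mul (D x) (D y) = mul (D y) (D x)) \<and>
     (\<forall>x\<in>A. \<forall>y\<in>A. D (mul (D x) y) = mul (D x) (D y)) \<and>
     (\<forall>x\<in>A. \<forall>y\<in>A. mul x (D y) = mul (D (mul x y)) x)"

definition lr_le :: "('b \<Rightarrow> 'b \<Rightarrow> 'b) \<Rightarrow> ('b \<Rightarrow> 'b) \<Rightarrow> 'b \<Rightarrow> 'b \<Rightarrow> bool" where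
  "lr_le mul D x y \<longleftrightarrow> x = mul (D x) y"

end

theory Submission
  imports Defs
begin

text \<open>
  By right pre-reducedness an element a of E is determined by the elements x with x * a = x.
  By (I1) and (I2), x fixes the first component e \<and> (s \<cdot> f) of (e, s)(f, t) exactly when
  x * e = x, x * s * f = x * s and x * d s = x. Every axiom of a left restriction semigroup
  thus becomes a comparison of such fixing conditions; for associativity, both bracketings of
  (e, s)(f, t)(h, u) have a first component fixed by exactly the x with x * e = x,
  x * s * f = x * s, x * d s = x and x * s * t * h = x * s * t.
\<close>

locale inductive_demigroup =
  fixes d :: "'a::semigroup_mult \<Rightarrow> 'a" and E :: "'a set"
    and meet :: "'a \<Rightarrow> 'a \<Rightarrow> 'a" and dot :: "'a \<Rightarrow> 'a \<Rightarrow> 'a"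
  assumes is_inductive: "inductive_E_demigroup d E meet dot"
begin

lemma E_idem: "e \<in> E \<Longrightarrow> e * e = e"
  using is_inductive unfolding inductive_E_demigroup_def E_demigroup_def idempotents_def by auto

lemma d_mult_d: "d (x * y) = d (x * d y)"
  using is_inductive unfolding inductive_E_demigroup_def E_demigroup_def demigroup_def by auto

lemma E_mult_d: "e \<in> E \<Longrightarrow> e * d e = e"
  using is_inductive unfolding inductive_E_demigroup_def E_demigroup_def by auto

lemma E_antisym: "e \<in> E \<Longrightarrow> f \<in> E \<Longrightarrow> e = e * f \<Longrightarrow> f = f * e \<Longrightarrow> e = f"
  using is_inductive unfolding inductive_E_demigroup_def right_pre_reduced_def by auto

lemma meet_in_E: "e \<in> E \<Longrightarrow> f \<in> E \<Longrightarrow> meet e f \<in> E"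
  using is_inductive unfolding inductive_E_demigroup_def is_meet_semilattice_def by auto

lemma meet_mult_left: "e \<in> E \<Longrightarrow> f \<in> E \<Longrightarrow> meet e f * e = meet e f"
  using is_inductive unfolding inductive_E_demigroup_def is_meet_semilattice_def le_r_def by metis

lemma meet_mult_right: "e \<in> E \<Longrightarrow> f \<in> E \<Longrightarrow> meet e f * f = meet e f"
  using is_inductive unfolding inductive_E_demigroup_def is_meet_semilattice_def le_r_def by metis

lemma dot_in_E: "e \<in> E \<Longrightarrow> dot s e \<in> E"
  using is_inductive unfolding inductive_E_demigroup_def by auto

lemma fixes_dot_iff: "e \<in> E \<Longrightarrow> x * dot t e = x \<longleftrightarrow> x * t * e = x * t \<and> x * d t = x"
  using is_inductive unfolding inductive_E_demigroup_def by auto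

lemma fixes_meetI: "e \<in> E \<Longrightarrow> f \<in> E \<Longrightarrow> x * e = x \<Longrightarrow> x * f = x \<Longrightarrow> x * meet e f = x"
  using is_inductive unfolding inductive_E_demigroup_def by auto

lemma fixes_meet_iff: "e \<in> E \<Longrightarrow> f \<in> E \<Longrightarrow> x * meet e f = x \<longleftrightarrow> x * e = x \<and> x * f = x"
  using fixes_meetI meet_mult_left meet_mult_right by (metis mult.assoc)

lemma E_eq_if_same_fixers:
  "a \<in> E \<Longrightarrow> b \<in> E \<Longrightarrow> (\<And>x. x \<in> E \<Longrightarrow> x * a = x \<longleftrightarrow> x * b = x) \<Longrightarrow> a = b"
  using E_antisym E_idem by metis

lemma meet_eq_left: "e \<in> E \<Longrightarrow> f \<in> E \<Longrightarrow> e * f = e \<Longrightarrow> meet e f = e"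
  by (rule E_eq_if_same_fixers) (auto simp: meet_in_E fixes_meet_iff, metis mult.assoc)

lemma meet_commute: "e \<in> E \<Longrightarrow> f \<in> E \<Longrightarrow> meet e f = meet f e"
  by (rule E_eq_if_same_fixers) (auto simp: meet_in_E fixes_meet_iff)

lemma fixes_meet_dot_iff: "e \<in> E \<Longrightarrow> f \<in> E \<Longrightarrow>
   x * meet e (dot s f) = x \<longleftrightarrow> x * e = x \<and> x * s * f = x * s \<and> x * d s = x"
  using fixes_meet_iff[OF _ dot_in_E] fixes_dot_iff by blast

lemma meet_dot_self: assumes "e \<in> E" "f \<in> E" shows "meet e (dot e f) = meet e f"
proof (rule E_eq_if_same_fixers)
  fix x
  have "x * e = x \<Longrightarrow> x * d e = x" using E_mult_d[OF assms(1)] by (metis mult.assoc)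
  then show "x * meet e (dot e f) = x \<longleftrightarrow> x * meet e f = x"
    using fixes_meet_dot_iff[OF assms] fixes_meet_iff[OF assms] by auto
qed (use assms meet_in_E dot_in_E in auto)

lemma CdE_iff: "(e, s) \<in> CdE d E \<longleftrightarrow> e \<in> E \<and> e * s = s \<and> d e = d s"
  by (simp add: CdE_def)

lemma meet_dot_fixes:
  assumes "e \<in> E" "f \<in> E"
  shows "meet e (dot s f) * s * f = meet e (dot s f) * s"
    and "meet e (dot s f) * d s = meet e (dot s f)"
  using fixes_meet_dot_iff[OF assms] E_idem[OF meet_in_E[OF assms(1) dot_in_E[OF assms(2)]]]
  by blast+

lemma d_meet_dot_mult:
  assumes "e \<in> E" and ft: "(f, t) \<in> CdE d E"
  shows "d (meet e (dot s f) * s * t) = d (meet e (dot s f))"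
proof -
  let ?g = "meet e (dot s f)"
  have f: "f \<in> E" "f * t = t" "d f = d t" using ft by (auto simp: CdE_iff)
  have gf: "?g * s * f = ?g * s" and gd: "?g * d s = ?g" using meet_dot_fixes assms(1) f(1) by auto
  have "d (?g * s * t) = d (?g * s * f * t)" using gf f(2) by (metis mult.assoc)
  also have "\<dots> = d (?g * s * f * d f)" using d_mult_d f(3) by simp
  also have "\<dots> = d (?g * s * f)" using E_mult_d[OF f(1)] by (simp add: mult.assoc)
  also have "\<dots> = d (?g * d s)" using gf d_mult_d by metis
  finally show ?thesis using gd by simp
qed

lemma P_mult_in_CdE:
  assumes "(e, s) \<in> CdE d E" "(f, t) \<in> CdE d E"
  shows "P_mult meet dot (e, s) (f, t) \<in> CdE d E"
proof -
  have E: "e \<in> E" "f \<in> E" using assms by (auto simp: CdE_iff)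
  let ?g = "meet e (dot s f)"
  have gE: "?g \<in> E" using E meet_in_E dot_in_E by auto
  have "?g * (?g * s * t) = ?g * s * t" using E_idem[OF gE] by (metis mult.assoc)
  then show ?thesis using d_meet_dot_mult[OF E(1) assms(2)] gE by (simp add: CdE_iff P_mult_def)
qed

lemma P_D_in_CdE: "x \<in> CdE d E \<Longrightarrow> P_D x \<in> CdE d E"
  by (auto simp: CdE_def P_D_def E_idem)

lemma fixes_meet_dot_CdE:
  assumes "(f, t) \<in> CdE d E" "h \<in> E"
  shows "y * meet f (dot t h) = y \<longleftrightarrow> y * f = y \<and> y * t * h = y * t"
proof -
  have f: "f \<in> E" "f * t = t" "d f = d t" using assms(1) by (auto simp: CdE_iff)
  have "y * f = y \<Longrightarrow> y * d t = y" using f E_mult_d[OF f(1)] by (metis mult.assoc)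
  then show ?thesis using fixes_meet_dot_iff[OF f(1) assms(2), of y t] by auto
qed

lemma fixes_fst_P_mult_assoc_left:
  assumes "(e, s) \<in> CdE d E" "(f, t) \<in> CdE d E" "h \<in> E"
  defines "g \<equiv> meet e (dot s f)"
  shows "w * meet g (dot (g * s * t) h) = w \<longleftrightarrow>
    w * e = w \<and> w * s * f = w * s \<and> w * d s = w \<and> w * s * t * h = w * s * t"
proof -
  have E: "e \<in> E" "f \<in> E" using assms(1,2) by (auto simp: CdE_iff)
  have gE: "g \<in> E" using E meet_in_E dot_in_E g_def by auto
  have "w * g = w \<Longrightarrow> w * d (g * s * t) = w"
    using d_meet_dot_mult[OF E(1) assms(2)] E_mult_d[OF gE] g_def by (metis mult.assoc)
  moreover have "w * g = w \<Longrightarrow> w * (g * s * t) = w * s * t" by (metis mult.assoc)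
  ultimately show ?thesis
    using fixes_meet_dot_iff[OF gE assms(3)] fixes_meet_dot_iff[OF E] g_def by auto
qed

lemma fixes_fst_P_mult_assoc_right:
  assumes "e \<in> E" "(f, t) \<in> CdE d E" "h \<in> E"
  shows "w * meet e (dot s (meet f (dot t h))) = w \<longleftrightarrow>
    w * e = w \<and> w * s * f = w * s \<and> w * d s = w \<and> w * s * t * h = w * s * t"
proof -
  have "meet f (dot t h) \<in> E" using assms(2,3) meet_in_E dot_in_E by (auto simp: CdE_iff)
  then show ?thesis
    using fixes_meet_dot_iff[OF assms(1)] fixes_meet_dot_CdE[OF assms(2,3), of "w * s"] by auto
qed

lemma P_mult_assoc:
  assumes x: "(e, s) \<in> CdE d E" and y: "(f, t) \<in> CdE d E" and z: "(h, u) \<in> CdE d E"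
  shows "P_mult meet dot (P_mult meet dot (e, s) (f, t)) (h, u) =
    P_mult meet dot (e, s) (P_mult meet dot (f, t) (h, u))"
proof -
  have E: "e \<in> E" "f \<in> E" "h \<in> E" using x y z by (auto simp: CdE_iff)
  define g where "g = meet e (dot s f)"
  define m where "m = meet f (dot t h)"
  define k where "k = meet g (dot (g * s * t) h)"
  define n where "n = meet e (dot s m)"
  have gE: "g \<in> E" and mE: "m \<in> E" using E meet_in_E dot_in_E g_def m_def by auto
  have kE: "k \<in> E" and nE: "n \<in> E" using gE mE E meet_in_E dot_in_E k_def n_def by auto
  have "k = n"
    using fixes_fst_P_mult_assoc_left[OF x y E(3)] fixes_fst_P_mult_assoc_right[OF E(1) y E(3)]
    by (intro E_eq_if_same_fixers[OF kE nE]) (simp add: k_def n_def g_def m_def)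
  have "k * (g * s * t) * u = k * s * t * u"
    using meet_mult_left[OF gE dot_in_E[OF E(3)]] k_def by (metis mult.assoc)
  moreover have "n * s * (m * t * u) = n * s * t * u"
    using meet_dot_fixes(1)[OF E(1) mE] n_def by (metis mult.assoc)
  ultimately show ?thesis using \<open>k = n\<close> by (simp add: P_mult_def g_def k_def m_def n_def)
qed

lemma P_mult_P_D_diag: "e \<in> E \<Longrightarrow> f \<in> E \<Longrightarrow> P_mult meet dot (e, e) (f, f) = (meet e f, meet e f)"
  using meet_dot_self meet_mult_left meet_mult_right meet_in_E by (simp add: P_mult_def)

lemma P_D_mult_self: "(e, s) \<in> CdE d E \<Longrightarrow> P_mult meet dot (P_D (e, s)) (e, s) = (e, s)"
  using meet_dot_self meet_eq_left E_idem by (simp add: CdE_iff P_mult_def P_D_def)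

lemma P_D_mult_commute: "e \<in> E \<Longrightarrow> f \<in> E \<Longrightarrow>
    P_mult meet dot (P_D (e, s)) (P_D (f, t)) = P_mult meet dot (P_D (f, t)) (P_D (e, s))"
  using P_mult_P_D_diag meet_commute by (simp add: P_D_def)

lemma P_D_P_mult_P_D: "e \<in> E \<Longrightarrow> f \<in> E \<Longrightarrow>
    P_D (P_mult meet dot (P_D (e, s)) (f, t)) = P_mult meet dot (P_D (e, s)) (P_D (f, t))"
  using P_mult_P_D_diag meet_dot_self by (simp add: P_mult_def P_D_def)

lemma P_mult_P_D_right:
  assumes "e \<in> E" "f \<in> E"
  shows "P_mult meet dot (e, s) (P_D (f, t)) =
    P_mult meet dot (P_D (P_mult meet dot (e, s) (f, t))) (e, s)"
proof -
  define g where "g = meet e (dot s f)"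
  have gE: "g \<in> E" using assms meet_in_E dot_in_E g_def by auto
  have "meet g (dot g e) = g"
    using meet_dot_self[OF gE assms(1)] meet_eq_left[OF gE assms(1)]
      meet_mult_left[OF assms(1) dot_in_E[OF assms(2)]] g_def by simp
  then show ?thesis
    using meet_dot_fixes(1)[OF assms] E_idem[OF gE]
    by (simp add: P_mult_def P_D_def g_def[symmetric])
qed

lemma lr_le_CdE_iff:
  assumes "(e, s) \<in> CdE d E" "(f, t) \<in> CdE d E"
  shows "lr_le (P_mult meet dot) P_D (e, s) (f, t) \<longleftrightarrow> le_r e f \<and> s = e * t"
proof -
  have E: "e \<in> E" "f \<in> E" using assms by (auto simp: CdE_iff)
  have "lr_le (P_mult meet dot) P_D (e, s) (f, t) \<longleftrightarrow> e = meet e f \<and> s = meet e f * e * t"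
    using meet_dot_self[OF E] by (simp add: lr_le_def P_mult_def P_D_def)
  also have "\<dots> \<longleftrightarrow> le_r e f \<and> s = e * t"
    using meet_mult_right[OF E] meet_eq_left[OF E] E_idem[OF E(1)] by (metis le_r_def)
  finally show ?thesis .
qed

end

theorem corollary3p8:
  fixes d :: "'a::semigroup_mult \<Rightarrow> 'a" and E :: "'a set"
    and meet :: "'a \<Rightarrow> 'a \<Rightarrow> 'a" and dot :: "'a \<Rightarrow> 'a \<Rightarrow> 'a"
  assumes "inductive_E_demigroup d E meet dot"
  shows "left_restriction_semigroup (CdE d E) (P_mult meet dot) P_D \<and>
    (\<forall>e s f t. (e, s) \<in> CdE d E \<longrightarrow> (f, t) \<in> CdE d E \<longrightarrow>
       (lr_le (P_mult meet dot) P_D (e, s) (f, t) \<longleftrightarrow> le_r e f \<and> s = e * t))"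
proof -
  interpret inductive_demigroup d E meet dot using assms by unfold_locales
  have "left_restriction_semigroup (CdE d E) (P_mult meet dot) P_D"
    unfolding left_restriction_semigroup_def
    using P_mult_in_CdE P_D_in_CdE P_mult_assoc P_D_mult_self P_D_mult_commute
      P_D_P_mult_P_D P_mult_P_D_right
    by (fastforce simp: CdE_iff)
  then show ?thesis using lr_le_CdE_iff by blast
qed

end
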